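(* Let $N=(V,M,E_V,E_M,\mathcal K)$ be a gene regulatory network with multiplexes, let $P,Q$ be assertions and let $p$ be a path program of $N$. Assume that every $while$ loop occurring in $p$ terminates, in the sense that for every $while$ subprogram $w=(while~e~with~I~do~p_0)$ of $p$ there is no infinite sequence of states $\eta_0,\eta_1,\eta_2,\dots$ such that, for every $i$, $\eta_i\models_N e$ and $\eta_{i+1}\in E_i$ for some set $E_i$ with $\eta_i\leadsto_{p_0}E_i$. If $\vdash\{P\}\,p\,\{Q\}$ is derivable with the inference rules and axioms of the modified Hoare logic, then the Hoare triple $\{P\}\,p\,\{Q\}$ is satisfied, i.e. for every state $\eta$ with $\eta\models_N P$ there exists a set of states $E$ with $\eta\leadsto_p E$ and $\eta'\models_N Q$ for all $\eta'\in E$.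
   Context: Gene regulatory network with multiplexes (GRN): a tuple $N=(V,M,E_V,E_M,\mathcal K)$ where $V$ (variables) and $M$ (multiplexes) are disjoint finite sets; $(V\cup M,E_V\cup E_M)$ is a directed graph whose edges in $E_V$ go from a variable to a multiplex and whose edges in $E_M$ go from a multiplex to a variable or a multiplex, and every directed cycle contains at least one variable; each variable $v$ has a positive integer bound $b_v$; each multiplex $m$ is labelled by a formula $\varphi_m$ built with $\neg,\wedge,\vee$ from atoms $v\ge s$ (where $v\to m\in E_V$ and $s\in\{1,\dots,b_v\}$) and atoms $m'$ (where $m'\to m\in E_M$). For $v\in V$, $N^{-1}(v)$ is the set of multiplexes $m$ with $m\to v\in E_M$. $\mathcal K=\{K_{v,\omega}\}$ is a family of integers indexed by $v\in V$ and $\omega\subseteq N^{-1}(v)$ with $0\le K_{v,\omega}\le b_v$. The flattened formula $\overline{\varphi_m}$ is obtained by repeatedly replacing each multiplex atom $m'$ by $\varphi_{m'}$; all its atoms are of the form $v\ge s$. States: a state is a map $\eta:V\to\mathbb N$ with $\eta(v)\le b_v$ for all $v$; $S$ denotes the set of states. $\eta\models v\ge s$ iff $\eta(v)\ge s$, extended to connectives as usual. The resources of $v$ at $\eta$ are $\rho(\eta,v)=\{m\in N^{-1}(v):\eta\models\overline{\varphi_m}\}$. For a state $\eta$, variable $v$ and $k\in[0,b_v]$, $\eta[v\leftarrow k]$ is the state equal to $\eta$ except that $v$ takes value $k$. State graph: there is a transition $\eta\to\eta'$ iff either (i) $\eta(v)=K_{v,\rho(\eta,v)}$ for all $v\in V$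 and $\eta'=\eta$, or (ii) there is $v\in V$ with $\eta(v)\ne K_{v,\rho(\eta,v)}$ and $\eta'=\eta[v\leftarrow \eta(v)+1]$ if $\eta(v)<K_{v,\rho(\eta,v)}$, $\eta'=\eta[v\leftarrow\eta(v)-1]$ if $\eta(v)>K_{v,\rho(\eta,v)}$. Assertion language: terms are integers, variable symbols $v\in V$, symbols $K_{v,\omega}$, and $(t+t')$, $(t-t')$; atoms are $t=t'$, $t<t'$, $t>t'$, $t\le t'$, $t\ge t'$; assertions are closed under $\neg,\wedge,\vee,\Rightarrow$. $\eta\models_N\varphi$ iff $\varphi$ holds in $\mathbb Z$ after replacing each $v$ by $\eta(v)$ and each $K_{v,\omega}$ by its value in $\mathcal K$. $Q[v\leftarrow t]$ denotes substitution of the term $t$ for each occurrence of $v$ in $Q$. An assertion is valid if every state satisfies it. Path programs: generated by $v+$, $v-$, $v:=n$ ($v\in V$, $n\in\mathbb N$), $assert(e)$ ($e$ an assertion), $(p_1;p_2)$ (associative), $(if~e~then~p_1~else~p_2)$, $(while~e~with~I~do~p)$ ($e,I$ assertions; $I$ is the loop invariant), $\forall(p_1,p_2)$, $\exists(p_1,p_2)$; additionally the empty program $\varepsilon$. Semantics: $\leadsto_p\subseteq S\times\mathcal P(S)$ is the smallest relation such that for every state $\eta$: (1) for $p=v+$ (resp. $v-$), with $\eta'=\eta[v\leftarrow\eta(v)+1]$ (resp. $\eta(v)-1$), if $\eta\to\eta'$ is a transition then $\eta\leadsto_p\{\eta'\}$; (2) $\eta\leadsto_{v:=k}\{\eta[v\leftarrow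 k]\}$; (3) if $\eta\models_N e$ then $\eta\leadsto_{assert(e)}\{\eta\}$; (4) if $\eta\leadsto_{p_1}E_1$ and $\eta\leadsto_{p_2}E_2$ then $\eta\leadsto_{\forall(p_1,p_2)}E_1\cup E_2$; (5) if $\eta\leadsto_{p_i}E$ ($i\in\{1,2\}$) then $\eta\leadsto_{\exists(p_1,p_2)}E$; (6) if $\eta\leadsto_{p_1}F$ and $(E_e)_{e\in F}$ is a family with $e\leadsto_{p_2}E_e$ for each $e\in F$, then $\eta\leadsto_{p_1;p_2}\bigcup_{e\in F}E_e$; (7) if $\eta\models_N e$ and $\eta\leadsto_{p_1}E$, or $\eta\not\models_N e$ and $\eta\leadsto_{p_2}E$, then $\eta\leadsto_{if~e~then~p_1~else~p_2}E$; (8) for $w=while~e~with~I~do~p_0$: if $\eta\models_N e$ and $\eta\leadsto_{p_0;w}E$ then $\eta\leadsto_wE$; if $\eta\not\models_N e$ then $\eta\leadsto_w\{\eta\}$; (9) $\eta\leadsto_\varepsilon\{\eta\}$. A Hoare triple $\{P\}p\{Q\}$ is satisfied iff for every $\eta\models_N P$ there is $E$ with $\eta\leadsto_pE$ and every $\eta'\in E$ satisfies $Q$. Formulas: for $v\in V$, $\omega\subseteq N^{-1}(v)$: $\Phi_v^\omega=\bigwedge_{m\in\omega}\overline{\varphi_m}\wedge\bigwedge_{m\in N^{-1}(v)\setminus\omega}\neg\overline{\varphi_m}$; $\Phi_v^+=\bigwedge_{\omega\subseteq N^{-1}(v)}(\Phi_v^\omega\Rightarrow K_{v,\omega}>v)$;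 $\Phi_v^-=\bigwedge_{\omega\subseteq N^{-1}(v)}(\Phi_v^\omega\Rightarrow K_{v,\omega}<v)$. Inference rules of the modified Hoare logic: Incrementation: $\{\Phi_v^+\wedge Q[v\leftarrow v+1]\}\,v+\,\{Q\}$. Decrementation: $\{\Phi_v^-\wedge Q[v\leftarrow v-1]\}\,v-\,\{Q\}$. Assert: $\{\Phi\wedge Q\}\,assert(\Phi)\,\{Q\}$. Universal: from $\{P_1\}p_1\{Q\}$ and $\{P_2\}p_2\{Q\}$ infer $\{P_1\wedge P_2\}\forall(p_1,p_2)\{Q\}$. Existential: from the same premises infer $\{P_1\vee P_2\}\exists(p_1,p_2)\{Q\}$. Assignment: $\{Q[v\leftarrow k]\}\,v:=k\,\{Q\}$. Sequential composition: from $\{P_2\}p_2\{Q\}$ and $\{P_1\}p_1\{P_2\}$ infer $\{P_1\}p_1;p_2\{Q\}$. Alternative: from $\{P_1\}p_1\{Q\}$ and $\{P_2\}p_2\{Q\}$ infer $\{(e\wedge P_1)\vee(\neg e\wedge P_2)\}\,if~e~then~p_1~else~p_2\,\{Q\}$. Iteration: from $\{e\wedge I\}p\{I\}$ infer $\{I\}\,while~e~with~I~do~p\,\{\neg e\wedge I\}$. Empty program: from $P\Rightarrow Q$ infer $\{P\}\varepsilon\{Q\}$. Boundary axioms: $0\le v$, $v\le b_v$, $0\le K_{v,\omega}$, $K_{v,\omega}\le b_v$. Premises of the form $P\Rightarrow Q$ are established by first-order logic and arithmetic on integers together with the boundary axioms. *)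

theory Defs
  imports Main
begin

section \<open>Gene regulatory networks with multiplexes\<close>

text \<open>Multiplex formulas: atoms v >= s, atoms m' (another multiplex), and the connectives.\<close>
datatype ('v, 'm) mform =
    MV 'v nat
  | MM 'm
  | MNot "('v, 'm) mform"
  | MAnd "('v, 'm) mform" "('v, 'm) mform"
  | MOr "('v, 'm) mform" "('v, 'm) mform"

text \<open>A GRN N = (V, M, E_V, E_M, K). The edges of E_M are split into edges
 multiplex -> variable (EMV) and multiplex -> multiplex (EMM).\<close>
record ('v, 'm) grn =
  Vars  :: "'v set"
  Mults :: "'m set"
  EV    :: "('v \<times> 'm) set"
  EMV   :: "('m \<times> 'v) set"
  EMM   :: "('m \<times> 'm) set"
  bnd   :: "'v \<Rightarrow> nat"
  phi   :: "'m \<Rightarrow> ('v, 'm) mform"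
  Kf    :: "'v \<Rightarrow> 'm set \<Rightarrow> nat"

definition Ninv :: "('v, 'm) grn \<Rightarrow> 'v \<Rightarrow> 'm set" where
  "Ninv N v = {m. (m, v) \<in> EMV N}"

fun mform_ok :: "('v, 'm) grn \<Rightarrow> 'm \<Rightarrow> ('v, 'm) mform \<Rightarrow> bool" where
  "mform_ok N m (MV v s) = ((v, m) \<in> EV N \<and> 1 \<le> s \<and> s \<le> bnd N v)"
| "mform_ok N m (MM m') = ((m', m) \<in> EMM N)"
| "mform_ok N m (MNot f) = mform_ok N m f"
| "mform_ok N m (MAnd f g) = (mform_ok N m f \<and> mform_ok N m g)"
| "mform_ok N m (MOr f g) = (mform_ok N m f \<and> mform_ok N m g)"

text \<open>Well-formedness. Every directed cycle of the graph contains a variable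
 iff the multiplex-to-multiplex edge relation is acyclic.\<close>
definition wf_grn :: "('v, 'm) grn \<Rightarrow> bool" where
  "wf_grn N \<longleftrightarrow>
     finite (Vars N) \<and> finite (Mults N) \<and>
     EV N \<subseteq> Vars N \<times> Mults N \<and>
     EMV N \<subseteq> Mults N \<times> Vars N \<and>
     EMM N \<subseteq> Mults N \<times> Mults N \<and>
     acyclic (EMM N) \<and>
     (\<forall>v\<in>Vars N. 0 < bnd N v) \<and>
     (\<forall>m\<in>Mults N. mform_ok N m (phi N m)) \<and>
     (\<forall>v\<in>Vars N. \<forall>\<omega>. \<omega> \<subseteq> Ninv N v \<longrightarrow> Kf N v \<omega> \<le> bnd N v)"

text \<open>Flattening: repeatedly replace multiplex atoms m' by phi m'.
 mflat phi n f performs n rounds of replacement; since the multiplex subgraph is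
 acyclic, card (Mults N) rounds replace every multiplex atom.\<close>
fun mflat :: "('m \<Rightarrow> ('v, 'm) mform) \<Rightarrow> nat \<Rightarrow> ('v, 'm) mform \<Rightarrow> ('v, 'm) mform" where
  "mflat ph n (MV v s) = MV v s"
| "mflat ph 0 (MM m) = MM m"
| "mflat ph (Suc n) (MM m) = mflat ph n (ph m)"
| "mflat ph n (MNot f) = MNot (mflat ph n f)"
| "mflat ph n (MAnd f g) = MAnd (mflat ph n f) (mflat ph n g)"
| "mflat ph n (MOr f g) = MOr (mflat ph n f) (mflat ph n g)"

definition flat :: "('v, 'm) grn \<Rightarrow> 'm \<Rightarrow> ('v, 'm) mform" where
  "flat N m = mflat (phi N) (card (Mults N)) (phi N m)"

section \<open>States and the state graph\<close>

type_synonym 'v state = "'v \<Rightarrow> nat"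

text \<open>A state is a map V -> nat bounded by b; outside V we fix the value 0.\<close>
definition is_state :: "('v, 'm) grn \<Rightarrow> 'v state \<Rightarrow> bool" where
  "is_state N \<eta> \<longleftrightarrow> (\<forall>v\<in>Vars N. \<eta> v \<le> bnd N v) \<and> (\<forall>v. v \<notin> Vars N \<longrightarrow> \<eta> v = 0)"

fun msat :: "'v state \<Rightarrow> ('v, 'm) mform \<Rightarrow> bool" where
  "msat \<eta> (MV v s) = (\<eta> v \<ge> s)"
| "msat \<eta> (MM m) = False"
| "msat \<eta> (MNot f) = (\<not> msat \<eta> f)"
| "msat \<eta> (MAnd f g) = (msat \<eta> f \<and> msat \<eta> g)"
| "msat \<eta> (MOr f g) = (msat \<eta> f \<or> msat \<eta> g)"

definition res :: "('v, 'm) grn \<Rightarrow> 'v state \<Rightarrow> 'v \<Rightarrow> 'm set" where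
  "res N \<eta> v = {m \<in> Ninv N v. msat \<eta> (flat N m)}"

definition trans :: "('v, 'm) grn \<Rightarrow> 'v state \<Rightarrow> 'v state \<Rightarrow> bool" where
  "trans N \<eta> \<eta>' \<longleftrightarrow> is_state N \<eta> \<and>
     (((\<forall>v\<in>Vars N. \<eta> v = Kf N v (res N \<eta> v)) \<and> \<eta>' = \<eta>) \<or>
      (\<exists>v\<in>Vars N. \<eta> v \<noteq> Kf N v (res N \<eta> v) \<and>
         (\<eta> v < Kf N v (res N \<eta> v) \<longrightarrow> \<eta>' = \<eta>(v := \<eta> v + 1)) \<and>
         (\<eta> v > Kf N v (res N \<eta> v) \<longrightarrow> \<eta>' = \<eta>(v := \<eta> v - 1))))"

section \<open>Assertion language\<close>

datatype ('v, 'm) aterm =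
    TConst int
  | TVar 'v
  | TK 'v "'m set"
  | TPlus "('v, 'm) aterm" "('v, 'm) aterm"
  | TMinus "('v, 'm) aterm" "('v, 'm) aterm"

datatype ('v, 'm) assn =
    AEq "('v, 'm) aterm" "('v, 'm) aterm"
  | ALt "('v, 'm) aterm" "('v, 'm) aterm"
  | AGt "('v, 'm) aterm" "('v, 'm) aterm"
  | ALe "('v, 'm) aterm" "('v, 'm) aterm"
  | AGe "('v, 'm) aterm" "('v, 'm) aterm"
  | ANot "('v, 'm) assn"
  | AAnd "('v, 'm) assn" "('v, 'm) assn"
  | AOr "('v, 'm) assn" "('v, 'm) assn"
  | AImp "('v, 'm) assn" "('v, 'm) assn"

fun tval :: "('v, 'm) grn \<Rightarrow> 'v state \<Rightarrow> ('v, 'm) aterm \<Rightarrow> int" where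
  "tval N \<eta> (TConst n) = n"
| "tval N \<eta> (TVar v) = int (\<eta> v)"
| "tval N \<eta> (TK v \<omega>) = int (Kf N v \<omega>)"
| "tval N \<eta> (TPlus t u) = tval N \<eta> t + tval N \<eta> u"
| "tval N \<eta> (TMinus t u) = tval N \<eta> t - tval N \<eta> u"

fun asat :: "('v, 'm) grn \<Rightarrow> 'v state \<Rightarrow> ('v, 'm) assn \<Rightarrow> bool" where
  "asat N \<eta> (AEq t u) = (tval N \<eta> t = tval N \<eta> u)"
| "asat N \<eta> (ALt t u) = (tval N \<eta> t < tval N \<eta> u)"
| "asat N \<eta> (AGt t u) = (tval N \<eta> t > tval N \<eta> u)"
| "asat N \<eta> (ALe t u) = (tval N \<eta> t \<le> tval N \<eta> u)"
| "asat N \<eta> (AGe t u) = (tval N \<eta> t \<ge> tval N \<eta> u)"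
| "asat N \<eta> (ANot a) = (\<not> asat N \<eta> a)"
| "asat N \<eta> (AAnd a b) = (asat N \<eta> a \<and> asat N \<eta> b)"
| "asat N \<eta> (AOr a b) = (asat N \<eta> a \<or> asat N \<eta> b)"
| "asat N \<eta> (AImp a b) = (asat N \<eta> a \<longrightarrow> asat N \<eta> b)"

definition valid :: "('v, 'm) grn \<Rightarrow> ('v, 'm) assn \<Rightarrow> bool" where
  "valid N a \<longleftrightarrow> (\<forall>\<eta>. is_state N \<eta> \<longrightarrow> asat N \<eta> a)"

fun tsubst :: "'v \<Rightarrow> ('v, 'm) aterm \<Rightarrow> ('v, 'm) aterm \<Rightarrow> ('v, 'm) aterm" where
  "tsubst v t (TConst n) = TConst n"
| "tsubst v t (TVar w) = (if w = v then t else TVar w)"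
| "tsubst v t (TK w \<omega>) = TK w \<omega>"
| "tsubst v t (TPlus a b) = TPlus (tsubst v t a) (tsubst v t b)"
| "tsubst v t (TMinus a b) = TMinus (tsubst v t a) (tsubst v t b)"

fun asubst :: "'v \<Rightarrow> ('v, 'm) aterm \<Rightarrow> ('v, 'm) assn \<Rightarrow> ('v, 'm) assn" where
  "asubst v t (AEq a b) = AEq (tsubst v t a) (tsubst v t b)"
| "asubst v t (ALt a b) = ALt (tsubst v t a) (tsubst v t b)"
| "asubst v t (AGt a b) = AGt (tsubst v t a) (tsubst v t b)"
| "asubst v t (ALe a b) = ALe (tsubst v t a) (tsubst v t b)"
| "asubst v t (AGe a b) = AGe (tsubst v t a) (tsubst v t b)"
| "asubst v t (ANot a) = ANot (asubst v t a)"
| "asubst v t (AAnd a b) = AAnd (asubst v t a) (asubst v t b)"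
| "asubst v t (AOr a b) = AOr (asubst v t a) (asubst v t b)"
| "asubst v t (AImp a b) = AImp (asubst v t a) (asubst v t b)"

text \<open>Flattened multiplex formulas as assertions (atom v >= s becomes v >= s;
 remaining multiplex atoms, which do not occur for well-formed N, become false).\<close>
fun mf_assn :: "('v, 'm) mform \<Rightarrow> ('v, 'm) assn" where
  "mf_assn (MV v s) = AGe (TVar v) (TConst (int s))"
| "mf_assn (MM m) = ALt (TConst 0) (TConst 0)"
| "mf_assn (MNot f) = ANot (mf_assn f)"
| "mf_assn (MAnd f g) = AAnd (mf_assn f) (mf_assn g)"
| "mf_assn (MOr f g) = AOr (mf_assn f) (mf_assn g)"

definition atrue :: "('v, 'm) assn" where
  "atrue = AEq (TConst 0) (TConst 0)"

text \<open>Finite conjunction (the order of the conjuncts is irrelevant).\<close>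
definition BigAnd :: "'a set \<Rightarrow> ('a \<Rightarrow> ('v, 'm) assn) \<Rightarrow> ('v, 'm) assn" where
  "BigAnd S f = foldr (\<lambda>x a. AAnd (f x) a) (SOME xs. set xs = S \<and> distinct xs) atrue"

definition PhiW :: "('v, 'm) grn \<Rightarrow> 'v \<Rightarrow> 'm set \<Rightarrow> ('v, 'm) assn" where
  "PhiW N v \<omega> = AAnd (BigAnd \<omega> (\<lambda>m. mf_assn (flat N m)))
                      (BigAnd (Ninv N v - \<omega>) (\<lambda>m. ANot (mf_assn (flat N m))))"

definition PhiPlus :: "('v, 'm) grn \<Rightarrow> 'v \<Rightarrow> ('v, 'm) assn" where
  "PhiPlus N v = BigAnd (Pow (Ninv N v)) (\<lambda>\<omega>. AImp (PhiW N v \<omega>) (AGt (TK v \<omega>) (TVar v)))"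

definition PhiMinus :: "('v, 'm) grn \<Rightarrow> 'v \<Rightarrow> ('v, 'm) assn" where
  "PhiMinus N v = BigAnd (Pow (Ninv N v)) (\<lambda>\<omega>. AImp (PhiW N v \<omega>) (ALt (TK v \<omega>) (TVar v)))"

section \<open>Path programs\<close>

datatype ('v, 'm) prog =
    Inc 'v
  | Dec 'v
  | Assign 'v nat
  | Assert "('v, 'm) assn"
  | Seq "('v, 'm) prog" "('v, 'm) prog"
  | If "('v, 'm) assn" "('v, 'm) prog" "('v, 'm) prog"
  | While "('v, 'm) assn" "('v, 'm) assn" "('v, 'm) prog"
  | Forall "('v, 'm) prog" "('v, 'm) prog"
  | Exists "('v, 'm) prog" "('v, 'm) prog"
  | Empty

fun prog_of :: "('v, 'm) grn \<Rightarrow> ('v, 'm) prog \<Rightarrow> bool" where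
  "prog_of N (Inc v) = (v \<in> Vars N)"
| "prog_of N (Dec v) = (v \<in> Vars N)"
| "prog_of N (Assign v k) = (v \<in> Vars N \<and> k \<le> bnd N v)"
| "prog_of N (Assert e) = True"
| "prog_of N (Seq p q) = (prog_of N p \<and> prog_of N q)"
| "prog_of N (If e p q) = (prog_of N p \<and> prog_of N q)"
| "prog_of N (While e I p) = prog_of N p"
| "prog_of N (Forall p q) = (prog_of N p \<and> prog_of N q)"
| "prog_of N (Exists p q) = (prog_of N p \<and> prog_of N q)"
| "prog_of N Empty = True"

fun subprogs :: "('v, 'm) prog \<Rightarrow> ('v, 'm) prog set" where
  "subprogs (Seq p q) = insert (Seq p q) (subprogs p \<union> subprogs q)"
| "subprogs (If e p q) = insert (If e p q) (subprogs p \<union> subprogs q)"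
| "subprogs (While e I p) = insert (While e I p) (subprogs p)"
| "subprogs (Forall p q) = insert (Forall p q) (subprogs p \<union> subprogs q)"
| "subprogs (Exists p q) = insert (Exists p q) (subprogs p \<union> subprogs q)"
| "subprogs p = {p}"

inductive sem :: "('v, 'm) grn \<Rightarrow> 'v state \<Rightarrow> ('v, 'm) prog \<Rightarrow> 'v state set \<Rightarrow> bool"
  for N :: "('v, 'm) grn" where
  sem_inc: "is_state N \<eta> \<Longrightarrow> trans N \<eta> (\<eta>(v := \<eta> v + 1)) \<Longrightarrow> sem N \<eta> (Inc v) {\<eta>(v := \<eta> v + 1)}"
| sem_dec: "is_state N \<eta> \<Longrightarrow> trans N \<eta> (\<eta>(v := \<eta> v - 1)) \<Longrightarrow> sem N \<eta> (Dec v) {\<eta>(v := \<eta> v - 1)}"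
| sem_assign: "is_state N \<eta> \<Longrightarrow> sem N \<eta> (Assign v k) {\<eta>(v := k)}"
| sem_assert: "is_state N \<eta> \<Longrightarrow> asat N \<eta> e \<Longrightarrow> sem N \<eta> (Assert e) {\<eta>}"
| sem_forall: "is_state N \<eta> \<Longrightarrow> sem N \<eta> p1 E1 \<Longrightarrow> sem N \<eta> p2 E2 \<Longrightarrow> sem N \<eta> (Forall p1 p2) (E1 \<union> E2)"
| sem_exists1: "is_state N \<eta> \<Longrightarrow> sem N \<eta> p1 E \<Longrightarrow> sem N \<eta> (Exists p1 p2) E"
| sem_exists2: "is_state N \<eta> \<Longrightarrow> sem N \<eta> p2 E \<Longrightarrow> sem N \<eta> (Exists p1 p2) E"
| sem_seq: "is_state N \<eta> \<Longrightarrow> sem N \<eta> p1 F \<Longrightarrow> (\<forall>e\<in>F. sem N e p2 (Ef e))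
            \<Longrightarrow> sem N \<eta> (Seq p1 p2) (\<Union>e\<in>F. Ef e)"
| sem_if_true: "is_state N \<eta> \<Longrightarrow> asat N \<eta> e \<Longrightarrow> sem N \<eta> p1 E \<Longrightarrow> sem N \<eta> (If e p1 p2) E"
| sem_if_false: "is_state N \<eta> \<Longrightarrow> \<not> asat N \<eta> e \<Longrightarrow> sem N \<eta> p2 E \<Longrightarrow> sem N \<eta> (If e p1 p2) E"
| sem_while_true: "is_state N \<eta> \<Longrightarrow> asat N \<eta> e \<Longrightarrow> sem N \<eta> (Seq p0 (While e I p0)) E
            \<Longrightarrow> sem N \<eta> (While e I p0) E"
| sem_while_false: "is_state N \<eta> \<Longrightarrow> \<not> asat N \<eta> e \<Longrightarrow> sem N \<eta> (While e I p0) {\<eta>}"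
| sem_empty: "is_state N \<eta> \<Longrightarrow> sem N \<eta> Empty {\<eta>}"

definition hoare_sat :: "('v, 'm) grn \<Rightarrow> ('v, 'm) assn \<Rightarrow> ('v, 'm) prog \<Rightarrow> ('v, 'm) assn \<Rightarrow> bool" where
  "hoare_sat N P p Q \<longleftrightarrow>
     (\<forall>\<eta>. is_state N \<eta> \<and> asat N \<eta> P \<longrightarrow>
        (\<exists>E. sem N \<eta> p E \<and> (\<forall>\<eta>'\<in>E. asat N \<eta>' Q)))"

text \<open>Derivability in the modified Hoare logic. Premises P ==> Q are taken to be
 valid assertions (true in every state of N).\<close>
inductive derivable :: "('v, 'm) grn \<Rightarrow> ('v, 'm) assn \<Rightarrow> ('v, 'm) prog \<Rightarrow> ('v, 'm) assn \<Rightarrow> bool"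
  for N :: "('v, 'm) grn" where
  d_inc: "derivable N (AAnd (PhiPlus N v) (asubst v (TPlus (TVar v) (TConst 1)) Q)) (Inc v) Q"
| d_dec: "derivable N (AAnd (PhiMinus N v) (asubst v (TMinus (TVar v) (TConst 1)) Q)) (Dec v) Q"
| d_assert: "derivable N (AAnd \<Phi> Q) (Assert \<Phi>) Q"
| d_forall: "derivable N P1 p1 Q \<Longrightarrow> derivable N P2 p2 Q \<Longrightarrow> derivable N (AAnd P1 P2) (Forall p1 p2) Q"
| d_exists: "derivable N P1 p1 Q \<Longrightarrow> derivable N P2 p2 Q \<Longrightarrow> derivable N (AOr P1 P2) (Exists p1 p2) Q"
| d_assign: "derivable N (asubst v (TConst (int k)) Q) (Assign v k) Q"
| d_seq: "derivable N P2 p2 Q \<Longrightarrow> derivable N P1 p1 P2 \<Longrightarrow> derivable N P1 (Seq p1 p2) Q"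
| d_if: "derivable N P1 p1 Q \<Longrightarrow> derivable N P2 p2 Q \<Longrightarrow>
         derivable N (AOr (AAnd e P1) (AAnd (ANot e) P2)) (If e p1 p2) Q"
| d_while: "derivable N (AAnd e I) p I \<Longrightarrow> derivable N I (While e I p) (AAnd (ANot e) I)"
| d_empty: "valid N (AImp P Q) \<Longrightarrow> derivable N P Empty Q"

definition loops_terminate :: "('v, 'm) grn \<Rightarrow> ('v, 'm) prog \<Rightarrow> bool" where
  "loops_terminate N p \<longleftrightarrow>
     (\<forall>e I p0. While e I p0 \<in> subprogs p \<longrightarrow>
        \<not> (\<exists>s :: nat \<Rightarrow> 'v state. \<forall>i. is_state N (s i) \<and> asat N (s i) e \<and>
              (\<exists>E. sem N (s i) p0 E \<and> s (Suc i) \<in> E)))"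

end

theory Submission
  imports Defs
begin

text \<open>For an increment of \<open>v\<close> at \<open>\<eta>\<close>, the precondition \<open>\<Phi>\<^sub>v\<^sup>+\<close> contains the implication
  \<open>\<Phi>\<^sub>v\<^sup>\<omega> \<Rightarrow> K(v, \<omega>) > v\<close> for \<open>\<omega> = \<rho>(\<eta>, v)\<close>, whose premise holds at \<open>\<eta>\<close>; hence
  \<open>\<eta>(v) < K(v, \<rho>(\<eta>, v))\<close> and the increment is a transition of the state graph (dually for
  decrements). Since \<open>K(v, \<omega>) \<le> b\<^sub>v\<close>, executions only reach states, so postconditions of
  subprograms can be fed to the next rule. The while rule follows by well-founded induction
  along single iterations of the loop body, which is exactly what the termination hypothesis
  provides.\<close>

lemma asat_BigAnd:
  assumes "finite S"
  shows "asat N \<eta> (BigAnd S f) \<longleftrightarrow> (\<forall>x\<in>S. asat N \<eta> (f x))"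
proof -
  have foldr_sat: "asat N \<eta> (foldr (\<lambda>x a. AAnd (f x) a) xs atrue) \<longleftrightarrow> (\<forall>x\<in>set xs. asat N \<eta> (f x))"
    for xs by (induction xs) (auto simp: atrue_def)
  have "set (SOME xs. set xs = S \<and> distinct xs) = S"
    using someI_ex[OF finite_distinct_list[OF assms]] by blast
  then show ?thesis unfolding BigAnd_def foldr_sat by simp
qed

lemma asat_mf_assn [simp]: "asat N \<eta> (mf_assn f) \<longleftrightarrow> msat \<eta> f"
  by (induction f) auto

lemma tval_tsubst:
  "tval N \<eta> t \<ge> 0 \<Longrightarrow> tval N \<eta> (tsubst v t a) = tval N (\<eta>(v := nat (tval N \<eta> t))) a"
  by (induction a) auto

lemma asat_asubst:
  "tval N \<eta> t \<ge> 0 \<Longrightarrow> asat N \<eta> (asubst v t Q) \<longleftrightarrow> asat N (\<eta>(v := nat (tval N \<eta> t))) Q"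
  by (induction Q) (auto simp: tval_tsubst)

lemma wf_grnD:
  assumes "wf_grn N"
  shows "finite (Mults N)" "EMV N \<subseteq> Mults N \<times> Vars N"
    and "v \<in> Vars N \<Longrightarrow> \<omega> \<subseteq> Ninv N v \<Longrightarrow> Kf N v \<omega> \<le> bnd N v"
  using assms unfolding wf_grn_def by simp_all

lemma finite_Ninv:
  assumes "wf_grn N"
  shows "finite (Ninv N v)"
proof (rule finite_subset)
  show "Ninv N v \<subseteq> Mults N" using wf_grnD(2)[OF assms] unfolding Ninv_def by blast
qed (rule wf_grnD(1)[OF assms])

lemma res_subset_Ninv: "res N \<eta> v \<subseteq> Ninv N v"
  by (auto simp: res_def)

lemma Kf_res_le_bnd: "wf_grn N \<Longrightarrow> v \<in> Vars N \<Longrightarrow> Kf N v (res N \<eta> v) \<le> bnd N v"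
  by (rule wf_grnD(3)[OF _ _ res_subset_Ninv])

lemma asat_PhiW_res:
  assumes "wf_grn N"
  shows "asat N \<eta> (PhiW N v (res N \<eta> v))"
proof -
  have "finite (Ninv N v)" using assms by (rule finite_Ninv)
  then have "finite (res N \<eta> v)" "finite (Ninv N v - res N \<eta> v)"
    using finite_subset[OF res_subset_Ninv] by auto
  moreover have "\<forall>m\<in>res N \<eta> v. msat \<eta> (flat N m)"
    and "\<forall>m\<in>Ninv N v - res N \<eta> v. \<not> msat \<eta> (flat N m)"
    unfolding res_def by auto
  ultimately show ?thesis
    unfolding PhiW_def asat.simps by (simp only: asat_BigAnd asat_mf_assn asat.simps(6))
qed

lemma asat_BigAnd_PhiW_imp:
  assumes "wf_grn N" "asat N \<eta> (BigAnd (Pow (Ninv N v)) (\<lambda>\<omega>. AImp (PhiW N v \<omega>) (C \<omega>)))"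
  shows "asat N \<eta> (C (res N \<eta> v))"
proof -
  have "\<forall>\<omega>\<in>Pow (Ninv N v). asat N \<eta> (AImp (PhiW N v \<omega>) (C \<omega>))"
    using assms(2) finite_Ninv[OF assms(1)] by (simp only: asat_BigAnd finite_Pow_iff)
  moreover have "res N \<eta> v \<in> Pow (Ninv N v)" using res_subset_Ninv by (rule PowI)
  ultimately have "asat N \<eta> (AImp (PhiW N v (res N \<eta> v)) (C (res N \<eta> v)))" by (rule bspec)
  with asat_PhiW_res[OF assms(1)] show ?thesis by simp
qed

lemma PhiPlus_less_Kf:
  assumes "wf_grn N" "asat N \<eta> (PhiPlus N v)"
  shows "\<eta> v < Kf N v (res N \<eta> v)"
  using asat_BigAnd_PhiW_imp[OF assms(1) assms(2)[unfolded PhiPlus_def]] by simp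

lemma PhiMinus_greater_Kf:
  assumes "wf_grn N" "asat N \<eta> (PhiMinus N v)"
  shows "Kf N v (res N \<eta> v) < \<eta> v"
  using asat_BigAnd_PhiW_imp[OF assms(1) assms(2)[unfolded PhiMinus_def]] by simp

lemma trans_Inc:
  assumes "is_state N \<eta>" "v \<in> Vars N" "\<eta> v < Kf N v (res N \<eta> v)"
  shows "trans N \<eta> (\<eta>(v := \<eta> v + 1))"
  using assms unfolding trans_def by (intro conjI disjI2 bexI[of _ v]) auto

lemma trans_Dec:
  assumes "is_state N \<eta>" "v \<in> Vars N" "Kf N v (res N \<eta> v) < \<eta> v"
  shows "trans N \<eta> (\<eta>(v := \<eta> v - 1))"
  using assms unfolding trans_def by (intro conjI disjI2 bexI[of _ v]) auto

lemma trans_IncD: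
  assumes "trans N \<eta> (\<eta>(v := \<eta> v + 1))"
  shows "v \<in> Vars N \<and> \<eta> v < Kf N v (res N \<eta> v)"
proof -
  have "\<eta>(v := \<eta> v + 1) \<noteq> \<eta>" by (metis fun_upd_same n_not_Suc_n Suc_eq_plus1)
  then obtain w where w: "w \<in> Vars N" "\<eta> w \<noteq> Kf N w (res N \<eta> w)"
    and up: "\<eta> w < Kf N w (res N \<eta> w) \<Longrightarrow> \<eta>(v := \<eta> v + 1) = \<eta>(w := \<eta> w + 1)"
    and down: "Kf N w (res N \<eta> w) < \<eta> w \<Longrightarrow> \<eta>(v := \<eta> v + 1) = \<eta>(w := \<eta> w - 1)"
    using assms unfolding trans_def by blast
  have "\<not> Kf N w (res N \<eta> w) < \<eta> w"
  proof
    assume "Kf N w (res N \<eta> w) < \<eta> w"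
    then have "(\<eta>(v := \<eta> v + 1)) v = (\<eta>(w := \<eta> w - 1)) v" using down by simp
    then show False by (cases "w = v") auto
  qed
  then have less: "\<eta> w < Kf N w (res N \<eta> w)" using w(2) by simp
  then have "(\<eta>(v := \<eta> v + 1)) v = (\<eta>(w := \<eta> w + 1)) v" using up by simp
  then have "w = v" by (cases "w = v") auto
  then show ?thesis using w(1) less by simp
qed

lemma sem_preserves_state:
  assumes "sem N \<eta> p E" "wf_grn N" "prog_of N p" "\<eta>' \<in> E"
  shows "is_state N \<eta>'"
  using assms
proof (induction arbitrary: \<eta>' rule: sem.induct)
  case (sem_inc \<eta> v)
  from trans_IncD[OF sem_inc.hyps(2)]
  have "v \<in> Vars N" "\<eta> v < Kf N v (res N \<eta> v)" by simp_all
  moreover have "Kf N v (res N \<eta> v) \<le> bnd N v" by (rule Kf_res_le_bnd[OF sem_inc.prems(1) calculation(1)])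
  ultimately show ?case using sem_inc by (auto simp: is_state_def)
qed (auto simp: is_state_def)

definition establishes :: "('v, 'm) grn \<Rightarrow> 'v state \<Rightarrow> ('v, 'm) prog \<Rightarrow> ('v, 'm) assn \<Rightarrow> bool" where
  "establishes N \<eta> p Q \<longleftrightarrow> (\<exists>E. sem N \<eta> p E \<and> (\<forall>\<eta>'\<in>E. asat N \<eta>' Q))"

lemma hoare_sat_iff_establishes:
  "hoare_sat N P p Q \<longleftrightarrow> (\<forall>\<eta>. is_state N \<eta> \<longrightarrow> asat N \<eta> P \<longrightarrow> establishes N \<eta> p Q)"
  unfolding hoare_sat_def establishes_def by blast

lemma establishes_Seq:
  assumes "is_state N \<eta>" "sem N \<eta> p1 F" "\<And>\<eta>'. \<eta>' \<in> F \<Longrightarrow> establishes N \<eta>' p2 Q"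
  shows "establishes N \<eta> (Seq p1 p2) Q"
proof -
  obtain Ef where "\<forall>\<eta>'\<in>F. sem N \<eta>' p2 (Ef \<eta>') \<and> (\<forall>x\<in>Ef \<eta>'. asat N x Q)"
    using assms(3) unfolding establishes_def by metis
  then show ?thesis unfolding establishes_def using sem_seq[OF assms(1,2)] by blast
qed

lemma hoare_sat_Inc:
  assumes "wf_grn N" "v \<in> Vars N"
  shows "hoare_sat N (AAnd (PhiPlus N v) (asubst v (TPlus (TVar v) (TConst 1)) Q)) (Inc v) Q"
  unfolding hoare_sat_def
proof (intro allI impI, elim conjE)
  fix \<eta> assume \<eta>: "is_state N \<eta>"
    and pre: "asat N \<eta> (AAnd (PhiPlus N v) (asubst v (TPlus (TVar v) (TConst 1)) Q))"
  have "trans N \<eta> (\<eta>(v := \<eta> v + 1))"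
    using trans_Inc[OF \<eta> assms(2) PhiPlus_less_Kf[OF assms(1)]] pre by simp
  moreover have "asat N (\<eta>(v := \<eta> v + 1)) Q"
    using pre asat_asubst[of N \<eta> "TPlus (TVar v) (TConst 1)" v Q] by (simp add: nat_add_distrib)
  ultimately show "\<exists>E. sem N \<eta> (Inc v) E \<and> (\<forall>\<eta>'\<in>E. asat N \<eta>' Q)"
    using sem_inc[OF \<eta>] by blast
qed

lemma hoare_sat_Dec:
  assumes "wf_grn N" "v \<in> Vars N"
  shows "hoare_sat N (AAnd (PhiMinus N v) (asubst v (TMinus (TVar v) (TConst 1)) Q)) (Dec v) Q"
  unfolding hoare_sat_def
proof (intro allI impI, elim conjE)
  fix \<eta> assume \<eta>: "is_state N \<eta>"
    and pre: "asat N \<eta> (AAnd (PhiMinus N v) (asubst v (TMinus (TVar v) (TConst 1)) Q))"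
  have less: "Kf N v (res N \<eta> v) < \<eta> v" using PhiMinus_greater_Kf[OF assms(1)] pre by simp
  then have "trans N \<eta> (\<eta>(v := \<eta> v - 1))" by (rule trans_Dec[OF \<eta> assms(2)])
  moreover have "asat N (\<eta>(v := \<eta> v - 1)) Q"
    using pre less asat_asubst[of N \<eta> "TMinus (TVar v) (TConst 1)" v Q]
    by (simp add: of_nat_diff nat_diff_distrib)
  ultimately show "\<exists>E. sem N \<eta> (Dec v) E \<and> (\<forall>\<eta>'\<in>E. asat N \<eta>' Q)"
    using sem_dec[OF \<eta>] by blast
qed

lemma hoare_sat_Assign: "hoare_sat N (asubst v (TConst (int k)) Q) (Assign v k) Q"
  unfolding hoare_sat_def using asat_asubst[of N _ "TConst (int k)" v Q] sem_assign by fastforce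

lemma hoare_sat_Assert: "hoare_sat N (AAnd \<Phi> Q) (Assert \<Phi>) Q"
  unfolding hoare_sat_def using sem_assert by fastforce

lemma hoare_sat_Empty: "valid N (AImp P Q) \<Longrightarrow> hoare_sat N P Empty Q"
  unfolding hoare_sat_def valid_def using sem_empty by fastforce

lemma hoare_sat_Forall:
  "hoare_sat N P1 p1 Q \<Longrightarrow> hoare_sat N P2 p2 Q \<Longrightarrow> hoare_sat N (AAnd P1 P2) (Forall p1 p2) Q"
  unfolding hoare_sat_def by (fastforce intro: sem_forall)

lemma hoare_sat_Exists:
  "hoare_sat N P1 p1 Q \<Longrightarrow> hoare_sat N P2 p2 Q \<Longrightarrow> hoare_sat N (AOr P1 P2) (Exists p1 p2) Q"
  unfolding hoare_sat_def by (fastforce intro: sem_exists1 sem_exists2)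

lemma hoare_sat_If:
  "hoare_sat N P1 p1 Q \<Longrightarrow> hoare_sat N P2 p2 Q \<Longrightarrow>
   hoare_sat N (AOr (AAnd e P1) (AAnd (ANot e) P2)) (If e p1 p2) Q"
  unfolding hoare_sat_def by (fastforce intro: sem_if_true sem_if_false)

lemma hoare_sat_Seq:
  assumes "wf_grn N" "prog_of N p1" "hoare_sat N P1 p1 P2" "hoare_sat N P2 p2 Q"
  shows "hoare_sat N P1 (Seq p1 p2) Q"
  unfolding hoare_sat_iff_establishes
proof (intro allI impI)
  fix \<eta> assume \<eta>: "is_state N \<eta>" and "asat N \<eta> P1"
  then obtain F where F: "sem N \<eta> p1 F" "\<forall>\<eta>'\<in>F. asat N \<eta>' P2"
    using assms(3) unfolding hoare_sat_def by blast
  have "establishes N \<eta>' p2 Q" if "\<eta>' \<in> F" for \<eta>'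
    using assms(4) sem_preserves_state[OF F(1) assms(1,2) that] F(2) that
    unfolding hoare_sat_iff_establishes by blast
  then show "establishes N \<eta> (Seq p1 p2) Q" by (rule establishes_Seq[OF \<eta> F(1)])
qed

text \<open>Pairs are oriented (successor, predecessor), so that well-foundedness of this relation
  says that no run of the loop body from states satisfying the guard goes on forever.\<close>
definition loop_step :: "('v, 'm) grn \<Rightarrow> ('v, 'm) assn \<Rightarrow> ('v, 'm) prog \<Rightarrow> ('v state \<times> 'v state) set" where
  "loop_step N e p0 = {(\<eta>', \<eta>). is_state N \<eta> \<and> asat N \<eta> e \<and> (\<exists>E. sem N \<eta> p0 E \<and> \<eta>' \<in> E)}"

lemma loops_terminate_While:
  "loops_terminate N (While e I p0) \<longleftrightarrow> wf (loop_step N e p0) \<and> loops_terminate N p0"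
proof -
  have "wf (loop_step N e p0) \<longleftrightarrow>
    \<not> (\<exists>s. \<forall>i. is_state N (s i) \<and> asat N (s i) e \<and> (\<exists>E. sem N (s i) p0 E \<and> s (Suc i) \<in> E))"
    unfolding wf_iff_no_infinite_down_chain loop_step_def by simp
  then show ?thesis unfolding loops_terminate_def by auto
qed

lemma loops_terminate_simps:
  "loops_terminate N (Seq p q) \<longleftrightarrow> loops_terminate N p \<and> loops_terminate N q"
  "loops_terminate N (If e p q) \<longleftrightarrow> loops_terminate N p \<and> loops_terminate N q"
  "loops_terminate N (Forall p q) \<longleftrightarrow> loops_terminate N p \<and> loops_terminate N q"
  "loops_terminate N (Exists p q) \<longleftrightarrow> loops_terminate N p \<and> loops_terminate N q"
  by (auto simp: loops_terminate_def)

lemma hoare_sat_While: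
  assumes "wf_grn N" "prog_of N p0" "wf (loop_step N e p0)" "hoare_sat N (AAnd e I) p0 I"
  shows "hoare_sat N I (While e I p0) (AAnd (ANot e) I)"
proof -
  have "establishes N \<eta> (While e I p0) (AAnd (ANot e) I)" if "is_state N \<eta>" "asat N \<eta> I" for \<eta>
    using assms(3) that
  proof (induction \<eta> rule: wf_induct_rule)
    case (less \<eta>)
    show ?case
    proof (cases "asat N \<eta> e")
      case False
      then show ?thesis
        using sem_while_false[OF less.prems(1) False] less.prems(2) unfolding establishes_def by auto
    next
      case True
      obtain F where F: "sem N \<eta> p0 F" "\<forall>\<eta>'\<in>F. asat N \<eta>' I"
        using assms(4) less.prems True unfolding hoare_sat_def by auto
      have "establishes N \<eta>' (While e I p0) (AAnd (ANot e) I)" if "\<eta>' \<in> F" for \<eta>'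
      proof (rule less.IH)
        show "(\<eta>', \<eta>) \<in> loop_step N e p0"
          using less.prems(1) True F(1) that unfolding loop_step_def by blast
        show "is_state N \<eta>'" by (rule sem_preserves_state[OF F(1) assms(1,2) that])
        show "asat N \<eta>' I" using F(2) that by blast
      qed
      then have "establishes N \<eta> (Seq p0 (While e I p0)) (AAnd (ANot e) I)"
        by (rule establishes_Seq[OF less.prems(1) F(1)])
      then show ?thesis
        using sem_while_true[OF less.prems(1) True] unfolding establishes_def by blast
    qed
  qed
  then show ?thesis unfolding hoare_sat_iff_establishes by blast
qed

theorem mainTheorem1:
  fixes N :: "('v, 'm) grn" and P Q :: "('v, 'm) assn" and p :: "('v, 'm) prog"
  assumes "wf_grn N"
    and "prog_of N p"
    and "loops_terminate N p"
    and "derivable N P p Q"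
  shows "hoare_sat N P p Q"
  using assms(4,2,3)
proof (induction rule: derivable.induct)
  case d_inc
  then show ?case by (simp add: hoare_sat_Inc assms(1))
next
  case d_dec
  then show ?case by (simp add: hoare_sat_Dec assms(1))
next
  case d_assert
  show ?case by (rule hoare_sat_Assert)
next
  case d_forall
  then show ?case by (simp add: hoare_sat_Forall loops_terminate_simps)
next
  case d_exists
  then show ?case by (simp add: hoare_sat_Exists loops_terminate_simps)
next
  case d_assign
  show ?case by (rule hoare_sat_Assign)
next
  case d_seq
  then show ?case using hoare_sat_Seq[OF assms(1)] by (simp add: loops_terminate_simps)
next
  case d_if
  then show ?case by (simp add: hoare_sat_If loops_terminate_simps)
next
  case d_while
  then show ?case using hoare_sat_While[OF assms(1)] by (simp add: loops_terminate_While)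
next
  case d_empty
  then show ?case by (simp add: hoare_sat_Empty)
qed

end
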